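(* Let $\mathcal{A}=(Q,\delta,s)$ be an NFA over a finite alphabet $\Sigma$ and let $B$ be any bisimulation on $\mathcal{A}^{-1}$. Then the partition $\mathcal{P}_B$ is forward-stable on $\mathcal{A}$.
   Context: An NFA is $\mathcal{A}=(Q,\delta,s)$ with $\delta:Q\times\Sigma\to2^Q$; write $\delta_a(u)=\delta(u,a)$, $\delta_a(T)=\bigcup_{u\in T}\delta_a(u)$ and $\delta_a^{-1}(u)=\{v:u\in\delta_a(v)\}$. $\mathcal{A}^{-1}=(Q,\delta^{-1},s)$ is the NFA with $\delta^{-1}(u,a)=\delta^{-1}_a(u)$ (all transitions reversed). A bisimulation on an NFA $(Q,\gamma,s)$ is a relation $B\subseteq Q\times Q$ such that for all $(u,v)\in B$ and $a\in\Sigma$: if $u'\in\gamma_a(u)$ then there is $v'\in\gamma_a(v)$ with $(u',v')\in B$, and if $v'\in\gamma_a(v)$ then there is $u'\in\gamma_a(u)$ with $(u',v')\in B$. $\mathcal{P}_B$ is the partition of $Q$ into the weakly connected components of the directed graph $(Q,B)$. A partition $\mathcal{P}$ of $Q$ is forward-stable on $\mathcal{A}$ if for any parts $S,T\in\mathcal{P}$ and every $a\in\Sigma$, $S\subseteq\delta_a(T)$ or $S\cap\delta_a(T)=\emptyset$. *)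

theory Defs
  imports Main
begin

definition nfa :: "'q set \<Rightarrow> 'a set \<Rightarrow> ('q \<Rightarrow> 'a \<Rightarrow> 'q set) \<Rightarrow> 'q \<Rightarrow> bool" where
  "nfa Q \<Sigma> \<delta> s \<longleftrightarrow> finite Q \<and> finite \<Sigma> \<and> s \<in> Q \<and>
     (\<forall>u\<in>Q. \<forall>a\<in>\<Sigma>. \<delta> u a \<subseteq> Q)"

definition img :: "('q \<Rightarrow> 'a \<Rightarrow> 'q set) \<Rightarrow> 'a \<Rightarrow> 'q set \<Rightarrow> 'q set" where
  "img \<delta> a T = (\<Union>u\<in>T. \<delta> u a)"

definition rev_delta :: "'q set \<Rightarrow> ('q \<Rightarrow> 'a \<Rightarrow> 'q set) \<Rightarrow> 'q \<Rightarrow> 'a \<Rightarrow> 'q set" where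
  "rev_delta Q \<delta> u a = {v \<in> Q. u \<in> \<delta> v a}"

definition bisimulation :: "'q set \<Rightarrow> 'a set \<Rightarrow> ('q \<Rightarrow> 'a \<Rightarrow> 'q set) \<Rightarrow> ('q \<times> 'q) set \<Rightarrow> bool" where
  "bisimulation Q \<Sigma> \<gamma> B \<longleftrightarrow> B \<subseteq> Q \<times> Q \<and>
     (\<forall>(u,v)\<in>B. \<forall>a\<in>\<Sigma>.
        (\<forall>u'\<in>\<gamma> u a. \<exists>v'\<in>\<gamma> v a. (u',v') \<in> B) \<and>
        (\<forall>v'\<in>\<gamma> v a. \<exists>u'\<in>\<gamma> u a. (u',v') \<in> B))"

text \<open>Weakly connected components of the digraph (Q, B)\<close>
definition partition_of :: "'q set \<Rightarrow> ('q \<times> 'q) set \<Rightarrow> 'q set set" where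
  "partition_of Q B = Q // ((B \<union> B\<inverse>) \<inter> (Q \<times> Q))\<^sup>*"

definition forward_stable :: "'q set set \<Rightarrow> 'a set \<Rightarrow> ('q \<Rightarrow> 'a \<Rightarrow> 'q set) \<Rightarrow> bool" where
  "forward_stable P \<Sigma> \<delta> \<longleftrightarrow>
     (\<forall>S\<in>P. \<forall>T\<in>P. \<forall>a\<in>\<Sigma>. S \<subseteq> img \<delta> a T \<or> S \<inter> img \<delta> a T = {})"

end

theory Submission
  imports Defs
begin

text \<open>If two states are linked by a bisimulation of the reversed automaton, every
  a-predecessor of one is linked to an a-predecessor of the other. Hence, when T is closed
  under the symmetric closure E of B, so is its a-successor set img delta a T, and therefore
  that set is also closed under E*, i.e. it is a union of parts of the partition. Every part S
  is then contained in it or disjoint from it.\<close>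

lemma bisimulation_converse:
  assumes "bisimulation Q \<Sigma> \<gamma> B"
  shows "bisimulation Q \<Sigma> \<gamma> (B\<inverse>)"
  using assms unfolding bisimulation_def by fast

lemma bisimulation_Un:
  assumes "bisimulation Q \<Sigma> \<gamma> B" and "bisimulation Q \<Sigma> \<gamma> C"
  shows "bisimulation Q \<Sigma> \<gamma> (B \<union> C)"
  using assms unfolding bisimulation_def by blast

lemma Image_img_subset_if_rev_bisimulation:
  assumes bis: "bisimulation Q \<Sigma> (rev_delta Q \<delta>) R"
    and a: "a \<in> \<Sigma>" and TQ: "T \<subseteq> Q" and closed: "R `` T \<subseteq> T"
  shows "R `` img \<delta> a T \<subseteq> img \<delta> a T"
proof
  fix z assume "z \<in> R `` img \<delta> a T"
  then obtain y w where yz: "(y, z) \<in> R" and w: "w \<in> T" "y \<in> \<delta> w a"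
    by (auto simp: img_def)
  have "w \<in> rev_delta Q \<delta> y a"
    using w TQ by (auto simp: rev_delta_def)
  then obtain w' where "w' \<in> rev_delta Q \<delta> z a" "(w, w') \<in> R"
    using bis a yz unfolding bisimulation_def by fast
  then show "z \<in> img \<delta> a T"
    using w closed by (auto simp: img_def rev_delta_def)
qed

lemma quotient_Image_subset:
  assumes "trans r" and "S \<in> A // r"
  shows "r `` S \<subseteq> S"
  using assms by (auto elim!: quotientE dest: transD)

lemma quotient_rtrancl_subset:
  assumes "r \<subseteq> A \<times> A" and "S \<in> A // r\<^sup>*"
  shows "S \<subseteq> A"
proof -
  have "r\<^sup>* `` A = A"
    using assms(1) by (intro Image_closed_trancl) blast
  then show ?thesis
    using assms(2) by (auto elim!: quotientE)
qed

lemma quotient_subset_or_disjoint: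
  assumes "sym r" and "r `` X \<subseteq> X" and "S \<in> A // r"
  shows "S \<subseteq> X \<or> S \<inter> X = {}"
proof (rule disjCI)
  assume "S \<inter> X \<noteq> {}"
  then obtain x u where S: "S = r `` {x}" and u: "u \<in> S" "u \<in> X"
    using assms(3) by (auto elim!: quotientE)
  have "x \<in> X"
    using u S assms(1,2) by (auto dest: symD)
  then show "S \<subseteq> X"
    using S assms(2) by blast
qed

theorem lemma20:
  fixes Q :: "'q set" and \<Sigma> :: "'a set" and \<delta> :: "'q \<Rightarrow> 'a \<Rightarrow> 'q set" and s :: 'q
    and B :: "('q \<times> 'q) set"
  assumes "nfa Q \<Sigma> \<delta> s"
    and "bisimulation Q \<Sigma> (rev_delta Q \<delta>) B"
  shows "forward_stable (partition_of Q B) \<Sigma> \<delta>"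
  unfolding forward_stable_def
proof (intro ballI)
  fix S T a
  assume S: "S \<in> partition_of Q B" and T: "T \<in> partition_of Q B" and a: "a \<in> \<Sigma>"
  define E where "E = (B \<union> B\<inverse>) \<inter> (Q \<times> Q)"
  have E_symcl: "E = B \<union> B\<inverse>"
    using assms(2) by (auto simp: E_def bisimulation_def)
  then have bisE: "bisimulation Q \<Sigma> (rev_delta Q \<delta>) E"
    using assms(2) by (simp add: bisimulation_Un bisimulation_converse)
  have T_closed: "E `` T \<subseteq> T"
    using quotient_Image_subset[OF trans_rtrancl T[unfolded partition_of_def, folded E_def]]
    by auto
  have "T \<subseteq> Q"
    using T by (intro quotient_rtrancl_subset[of E Q]) (auto simp: E_def partition_of_def)
  then have "E `` img \<delta> a T \<subseteq> img \<delta> a T"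
    by (rule Image_img_subset_if_rev_bisimulation[OF bisE a _ T_closed])
  then have "E\<^sup>* `` img \<delta> a T \<subseteq> img \<delta> a T"
    by (simp add: Image_closed_trancl)
  moreover have "sym (E\<^sup>*)"
    by (simp add: E_symcl sym_rtrancl sym_Un_converse)
  ultimately show "S \<subseteq> img \<delta> a T \<or> S \<inter> img \<delta> a T = {}"
    using S by (intro quotient_subset_or_disjoint) (auto simp: partition_of_def E_def)
qed

end
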